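(* Let $C\subset Ob(CC(R,LM))$ be closed under $ft$ and $\le$ a transitive relation on $C$ such that $\Gamma\le\Gamma'$ implies $l(\Gamma)=l(\Gamma')$, and such that for $\Gamma,F\in C$ with $ft(\Gamma)\le F$ one has $\sigma(\Gamma,F)\in C$ and $\Gamma\le\sigma(\Gamma,F)$. Then: (1) if $(\Gamma,T),(\Gamma,T')\in C$, $(\Gamma,T)\le(\Gamma,T')$ and $\Gamma\le\Gamma'$, then $(\Gamma,T)\le(\Gamma',T')$; (2) if moreover $\le$ is symmetric and $ft$-monotone (i.e. $\Gamma\le\Gamma'$ implies $ft(\Gamma)\le ft(\Gamma')$), then $(\Gamma,T)\le(\Gamma',T')$ implies $(\Gamma,T)\le(\Gamma,T')$.
   Context: $[n]=\{1,\dots,n\}$; $R$ is a monad on Sets and $LM$ a left $R$-module with values in Sets. $Ob(CC(R,LM))$ is the set of finite sequences $(T_1,\dots,T_n)$ with $T_j\in LM([j-1])$; $l$ is length; $ft$ drops the last entry ($ft()=()$); $(\Gamma,T)$ denotes the sequence $\Gamma$ extended by $T$. For $\Gamma=(T_1,\dots,T_{n+k})$, $k>0$, and $\Gamma'=(T'_1,\dots,T'_n)$: $\sigma(\Gamma,\Gamma')=(T'_1,\dots,T'_n,T_{n+1},\dots,T_{n+k})$. *)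

theory Defs
  imports Main
begin

text \<open>The family LM is given by its values on the standard
finite sets: LMn n stands for LM([n]) (all embedded in one carrier type 'a).
A sequence (T_1,...,T_n) is a list ts with ts!(j-1) in LM([j-1]), i.e. ts!i in LMn i.\<close>
definition CC_Ob :: "(nat \<Rightarrow> 'a set) \<Rightarrow> 'a list set" where
  "CC_Ob LMn = {ts. \<forall>i < length ts. ts ! i \<in> LMn i}"

definition ft :: "'a list \<Rightarrow> 'a list" where
  "ft G = butlast G"

text \<open>sigma(Gamma, Gamma') for l(Gamma) = n + k and l(Gamma') = n:
replace the first n entries of Gamma by Gamma'.\<close>
definition sigma :: "'a list \<Rightarrow> 'a list \<Rightarrow> 'a list" where
  "sigma G G' = G' @ drop (length G') G"

end

theory Submission
  imports Defs
begin

text \<open>Both parts rest on one observation: if \<open>\<Gamma> \<le> \<Gamma>'\<close>, then \<open>\<sigma>((\<Gamma>,T),\<Gamma>') = (\<Gamma>',T)\<close>,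
so the axiom on \<open>\<sigma>\<close> gives \<open>(\<Gamma>,T) \<le> (\<Gamma>',T)\<close>. Part (1) composes \<open>(\<Gamma>,T) \<le> (\<Gamma>,T') \<le> (\<Gamma>',T')\<close>; in part (2),
\<open>ft\<close>-monotonicity and symmetry give \<open>\<Gamma>' \<le> \<Gamma>\<close>, and then
\<open>(\<Gamma>,T) \<le> (\<Gamma>',T') \<le> (\<Gamma>,T')\<close>.\<close>

lemma sigma_snoc:
  assumes "length F = length G"
  shows "sigma (G @ [T]) F = F @ [T]"
  using assms by (simp add: sigma_def)

lemma le_snoc_transport:
  fixes C :: "'a list set" and le :: "'a list \<Rightarrow> 'a list \<Rightarrow> bool"
  assumes le_on_C: "\<And>G G'. le G G' \<Longrightarrow> G \<in> C \<and> G' \<in> C"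
    and le_len: "\<And>G G'. le G G' \<Longrightarrow> length G = length G'"
    and le_sigma: "\<And>G F. \<lbrakk>G \<in> C; F \<in> C; G \<noteq> []; le (ft G) F\<rbrakk>
                     \<Longrightarrow> sigma G F \<in> C \<and> le G (sigma G F)"
    and "le G G'" and "G @ [T] \<in> C"
  shows "le (G @ [T]) (G' @ [T])"
proof -
  have "le (ft (G @ [T])) G'" "G' \<in> C"
    using \<open>le G G'\<close> le_on_C by (auto simp: ft_def)
  then have "le (G @ [T]) (sigma (G @ [T]) G')"
    using le_sigma \<open>G @ [T] \<in> C\<close> by blast
  moreover have "sigma (G @ [T]) G' = G' @ [T]"
    using le_len[OF \<open>le G G'\<close>] by (simp add: sigma_snoc)
  ultimately show ?thesis by simp
qed

lemma le_snoc_prefix: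
  assumes le_sym: "\<And>G G'. le G G' \<Longrightarrow> le G' G"
    and le_ft: "\<And>G G'. le G G' \<Longrightarrow> le (ft G) (ft G')"
    and "le (G @ [T]) (G' @ [T'])"
  shows "le G' G"
proof -
  have "le G G'" using le_ft[OF \<open>le (G @ [T]) (G' @ [T'])\<close>] by (simp add: ft_def)
  then show ?thesis by (rule le_sym)
qed

theorem lemma6p8:
  fixes LMn :: "nat \<Rightarrow> 'a set"
    and C :: "'a list set"
    and le :: "'a list \<Rightarrow> 'a list \<Rightarrow> bool"
  assumes C_sub: "C \<subseteq> CC_Ob LMn"
    and C_ft: "\<And>G. G \<in> C \<Longrightarrow> ft G \<in> C"
    and le_on_C: "\<And>G G'. le G G' \<Longrightarrow> G \<in> C \<and> G' \<in> C"
    and le_trans: "\<And>G1 G2 G3. \<lbrakk>G1 \<in> C; G2 \<in> C; G3 \<in> C; le G1 G2; le G2 G3\<rbrakk> \<Longrightarrow> le G1 G3"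
    and le_len: "\<And>G G'. le G G' \<Longrightarrow> length G = length G'"
    and le_sigma: "\<And>G F. \<lbrakk>G \<in> C; F \<in> C; G \<noteq> []; le (ft G) F\<rbrakk>
                     \<Longrightarrow> sigma G F \<in> C \<and> le G (sigma G F)"
  shows "(\<forall>G G' T T'. G @ [T] \<in> C \<and> G @ [T'] \<in> C \<and> le (G @ [T]) (G @ [T']) \<and> le G G'
            \<longrightarrow> le (G @ [T]) (G' @ [T']))
       \<and> ((\<forall>G G'. le G G' \<longrightarrow> le G' G) \<and> (\<forall>G G'. le G G' \<longrightarrow> le (ft G) (ft G'))
            \<longrightarrow> (\<forall>G G' T T'. le (G @ [T]) (G' @ [T']) \<longrightarrow> le (G @ [T]) (G @ [T'])))"
proof (intro conjI impI allI)
  note transport = le_snoc_transport[OF le_on_C le_len le_sigma]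
  fix G G' T T'
  {
    assume h: "G @ [T] \<in> C \<and> G @ [T'] \<in> C \<and> le (G @ [T]) (G @ [T']) \<and> le G G'"
    then have "le (G @ [T']) (G' @ [T'])" using transport by blast
    with h show "le (G @ [T]) (G' @ [T'])" using le_on_C le_trans by blast
  next
    assume "(\<forall>G G'. le G G' \<longrightarrow> le G' G) \<and> (\<forall>G G'. le G G' \<longrightarrow> le (ft G) (ft G'))"
      and h: "le (G @ [T]) (G' @ [T'])"
    then have "le G' G" by (blast intro: le_snoc_prefix)
    moreover have "G' @ [T'] \<in> C" using h le_on_C by blast
    ultimately have "le (G' @ [T']) (G @ [T'])" using transport by blast
    with h show "le (G @ [T]) (G @ [T'])" using le_on_C le_trans by blast
  }
qed

end
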